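(* Let $n\ge 1$ and let $S=\{w_1,\dots,w_s\}\subset\mathbb{C}^n$ be a unitary 2-design. Then \[ \mathrm{MM}_n = \mathbf{1}\otimes\mathbf{1}\otimes\mathbf{1} + \frac{n^3}{s^3}\sum_{\substack{i,j,k\in\{1,\dots,s\}\\ \text{pairwise distinct}}} |w_i\rangle\langle w_j - w_i| \otimes |w_j\rangle\langle w_k - w_j| \otimes |w_k\rangle\langle w_i - w_k| . \]
   Context: For $u, v \in \mathbb{C}^n$, $|u\rangle\langle v|$ denotes the $n\times n$ matrix whose $(i,j)$ entry is $u_i \overline{v_j}$. Let $e_1,\dots,e_n$ be the standard basis of $\mathbb{C}^n$ and $E_{ab} = |e_a\rangle\langle e_b|$. The matrix multiplication tensor is $\mathrm{MM}_n = \sum_{a,b,c=1}^n E_{ab}\otimes E_{bc}\otimes E_{ca} \in \mathbb{C}^{n\times n}\otimes\mathbb{C}^{n\times n}\otimes\mathbb{C}^{n\times n}$; $\mathbf{1}$ is the $n\times n$ identity matrix. A finite set $S = \{w_1,\dots,w_s\} \subset \mathbb{C}^n$ is a unitary 2-design if $\sum_{i=1}^s w_i = 0$ and $\frac{1}{s}\sum_{i=1}^s |w_i\rangle\langle w_i| = \frac{1}{n}\mathbf{1}$. *)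

theory Defs
  imports "HOL-Analysis.Analysis"
begin

text \<open>Vectors in C^n are modelled as complex^'n for a finite index type 'n
  (so n = CARD('n) >= 1); n x n matrices as complex^'n^'n.\<close>

definition ketbra :: "complex^'n \<Rightarrow> complex^'n \<Rightarrow> complex^'n^'n" where
  "ketbra u v = (\<chi> i j. u$i * cnj (v$j))"

definition Eab :: "'n::finite \<Rightarrow> 'n \<Rightarrow> complex^'n^'n" where
  "Eab a b = ketbra (axis a 1) (axis b 1)"

text \<open>Elements of C^{nxn} (x) C^{nxn} (x) C^{nxn} are represented by their
  coordinate functions; the tensor product of three matrices is the pure tensor.\<close>

type_synonym 'n tensor3 = "('n \<times> 'n) \<Rightarrow> ('n \<times> 'n) \<Rightarrow> ('n \<times> 'n) \<Rightarrow> complex"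

definition tensor3 :: "complex^'n^'n \<Rightarrow> complex^'n^'n \<Rightarrow> complex^'n^'n \<Rightarrow> 'n tensor3" where
  "tensor3 A B C = (\<lambda>(a,b) (c,d) (e,f). A$a$b * B$c$d * C$e$f)"

definition MM :: "('n::finite) tensor3" where
  "MM = (\<lambda>p q r. \<Sum>a\<in>UNIV. \<Sum>b\<in>UNIV. \<Sum>c\<in>UNIV. tensor3 (Eab a b) (Eab b c) (Eab c a) p q r)"

definition unitary_2_design :: "(complex^'n::finite) set \<Rightarrow> bool" where
  "unitary_2_design S \<longleftrightarrow> finite S \<and> (\<Sum>w\<in>S. w) = 0 \<and>
     (1 / real (card S)) *\<^sub>R (\<Sum>w\<in>S. ketbra w w) = (1 / real CARD('n)) *\<^sub>R mat 1"

end

theory Submission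
  imports Defs
begin

text \<open>Expanding the three differences turns the triple sum over \<open>S\<^sup>3\<close> into eight products of
  three single sums. Six of them contain an unweighted first moment \<open>\<Sum>w\<in>S. w$a\<close>, which vanishes
  for a design; the two survivors are products of second moments \<open>(s/n) \<delta>\<close>, giving
  \<open>(s/n)\<^sup>3 (MM - 1\<otimes>1\<otimes>1)\<close> coordinatewise. Terms with two equal vectors vanish, so only pairwise
  distinct triples contribute.\<close>

lemma triple_sum_product:
  fixes f g h :: "'a \<Rightarrow> 'b::comm_semiring_0"
  shows "(\<Sum>u\<in>S. \<Sum>v\<in>S. \<Sum>x\<in>S. f u * g v * h x) = sum f S * sum g S * sum h S"
proof -
  have "(\<Sum>u\<in>S. \<Sum>v\<in>S. \<Sum>x\<in>S. f u * g v * h x) = (\<Sum>u\<in>S. \<Sum>v\<in>S. f u * g v * sum h S)"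
    by (simp add: sum_distrib_left)
  also have "\<dots> = (\<Sum>u\<in>S. f u * sum g S * sum h S)"
    by (simp only: sum_distrib_left [symmetric] sum_distrib_right [symmetric])
  finally show ?thesis
    by (simp add: sum_distrib_right)
qed

lemma sum3_cyclic_differences:
  fixes A B C D E F :: "'a \<Rightarrow> 'b::comm_ring"
  assumes "sum A S = 0" "sum C S = 0" "sum E S = 0"
  shows "(\<Sum>u\<in>S. \<Sum>v\<in>S. \<Sum>x\<in>S. A u * (B v - B u) * C v * (D x - D v) * E x * (F u - F x)) =
      (\<Sum>u\<in>S. A u * F u) * (\<Sum>v\<in>S. C v * B v) * (\<Sum>x\<in>S. E x * D x)
    - (\<Sum>u\<in>S. A u * B u) * (\<Sum>v\<in>S. C v * D v) * (\<Sum>x\<in>S. E x * F x)"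
proof -
  have expand: "A u * (B v - B u) * C v * (D x - D v) * E x * (F u - F x) =
       (A u * F u) * (C v * B v) * (E x * D x)
     - A u * (C v * B v) * (E x * D x * F x)
     - (A u * F u) * (C v * B v * D v) * E x
     + A u * (C v * B v * D v) * (E x * F x)
     - (A u * B u * F u) * C v * (E x * D x)
     + (A u * B u) * C v * (E x * D x * F x)
     + (A u * B u * F u) * (C v * D v) * E x
     - (A u * B u) * (C v * D v) * (E x * F x)" for u v x
    by (simp add: algebra_simps)
  show ?thesis
    unfolding expand by (simp only: sum.distrib sum_subtractf triple_sum_product assms) simp
qed

lemma tensor3_apply: "tensor3 A B C (a,b) (c,d) (e,f) = A$a$b * B$c$d * C$e$f"
  by (simp add: tensor3_def)

lemma Eab_nth: "Eab x y $ i $ j = (if i = x \<and> j = y then 1 else 0)"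
  by (simp add: Eab_def ketbra_def axis_def)

lemma MM_apply: "MM (a,b) (c,d) (e,f) = of_bool (a = f \<and> b = c \<and> d = e)"
proof -
  have "Eab x y $ a $ b * Eab y z $ c $ d * Eab z x $ e $ f =
     (if z = d then if y = b then if x = a then of_bool (a = f \<and> b = c \<and> d = e)
      else 0 else 0 else 0)" for x y z
    by (auto simp: Eab_nth)
  then show ?thesis unfolding MM_def tensor3_def by simp
qed

lemma tensor3_identity_apply:
  "tensor3 (mat 1) (mat 1) (mat 1) (a,b) (c,d) (e,f) = of_bool (a = b \<and> c = d \<and> e = f)"
  by (simp add: tensor3_def mat_def)

lemma unitary_2_design_card_pos:
  fixes S :: "(complex^'n::finite) set"
  assumes "unitary_2_design S"
  shows "card S > 0"
proof (rule ccontr)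
  assume "\<not> card S > 0"
  with assms have "(mat 1 :: complex^'n^'n) = 0"
    by (simp add: unitary_2_design_def)
  then have "(mat 1 :: complex^'n^'n) $ i $ i = 0" for i
    by simp
  then show False by (simp add: mat_def)
qed

lemma unitary_2_design_first_moment:
  fixes S :: "(complex^'n::finite) set"
  assumes "unitary_2_design S"
  shows "(\<Sum>w\<in>S. w $ a) = 0"
proof -
  have "(\<Sum>w\<in>S. w) $ a = 0"
    using assms by (simp add: unitary_2_design_def)
  then show ?thesis by simp
qed

lemma unitary_2_design_second_moment:
  fixes S :: "(complex^'n::finite) set"
  assumes "unitary_2_design S"
  shows "(\<Sum>w\<in>S. w $ a * cnj (w $ b)) =
    of_real (real (card S) / real CARD('n)) * of_bool (a = b)"
proof -
  have "((1 / real (card S)) *\<^sub>R (\<Sum>w\<in>S. ketbra w w)) $ a $ b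
      = ((1 / real CARD('n)) *\<^sub>R (mat 1 :: complex^'n^'n)) $ a $ b"
    using assms by (simp add: unitary_2_design_def)
  then have "(1 / real (card S)) *\<^sub>R (\<Sum>w\<in>S. w $ a * cnj (w $ b))
      = (1 / real CARD('n)) *\<^sub>R of_bool (a = b)"
    by (simp add: ketbra_def mat_def)
  then show ?thesis
    using unitary_2_design_card_pos [OF assms]
    by (auto simp: scaleR_conv_of_real field_simps)
qed

lemma unitary_2_design_triple_sum:
  fixes S :: "(complex^'n::finite) set"
  assumes "unitary_2_design S"
  shows "(\<Sum>(u,v,x)\<in>S \<times> S \<times> S. tensor3 (ketbra u (v - u)) (ketbra v (x - v)) (ketbra x (u - x)) p q r)
    = of_real (real (card S) / real CARD('n)) ^ 3 * (MM p q r - tensor3 (mat 1) (mat 1) (mat 1) p q r)"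
proof -
  obtain a b c d e f where pqr: "p = (a,b)" "q = (c,d)" "r = (e,f)"
    by (metis surj_pair)
  let ?m = "\<lambda>i j. \<Sum>w\<in>S. w $ i * cnj (w $ j)"
  have "(\<Sum>(u,v,x)\<in>S \<times> S \<times> S. tensor3 (ketbra u (v - u)) (ketbra v (x - v)) (ketbra x (u - x)) p q r)
      = (\<Sum>u\<in>S. \<Sum>v\<in>S. \<Sum>x\<in>S. u$a * (cnj (v$b) - cnj (u$b)) * v$c * (cnj (x$d) - cnj (v$d))
           * x$e * (cnj (u$f) - cnj (x$f)))"
    by (simp add: sum.cartesian_product pqr tensor3_apply ketbra_def mult.assoc)
  also have "\<dots> = ?m a f * ?m c b * ?m e d - ?m a b * ?m c d * ?m e f"
    by (rule sum3_cyclic_differences) (simp_all add: unitary_2_design_first_moment [OF assms])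
  also have "\<dots> = of_real (real (card S) / real CARD('n)) ^ 3 *
      (of_bool (a = f \<and> b = c \<and> d = e) - of_bool (a = b \<and> c = d \<and> e = f))"
    unfolding unitary_2_design_second_moment [OF assms]
    by (simp add: of_bool_conj power3_eq_cube eq_commute [of c b] eq_commute [of e d] algebra_simps)
  finally show ?thesis
    by (simp add: pqr MM_apply tensor3_identity_apply)
qed

lemma sum_distinct_triples_eq:
  fixes S :: "(complex^'n::finite) set"
  assumes "finite S"
  shows "(\<Sum>(u,v,x)\<in>{(u,v,x). u \<in> S \<and> v \<in> S \<and> x \<in> S \<and> u \<noteq> v \<and> v \<noteq> x \<and> u \<noteq> x}.
      tensor3 (ketbra u (v - u)) (ketbra v (x - v)) (ketbra x (u - x)) p q r)
    = (\<Sum>(u,v,x)\<in>S \<times> S \<times> S. tensor3 (ketbra u (v - u)) (ketbra v (x - v)) (ketbra x (u - x)) p q r)"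
  by (rule sum.mono_neutral_left) (auto simp: assms tensor3_def ketbra_def)

theorem mainTheorem2:
  fixes S :: "(complex^'n::finite) set"
  assumes "unitary_2_design S"
  shows "MM = (\<lambda>p q r. tensor3 (mat 1) (mat 1) (mat 1) p q r
            + complex_of_real (real CARD('n) ^ 3 / real (card S) ^ 3) *
              (\<Sum>(u,v,x)\<in>{(u,v,x). u \<in> S \<and> v \<in> S \<and> x \<in> S \<and> u \<noteq> v \<and> v \<noteq> x \<and> u \<noteq> x}.
                 tensor3 (ketbra u (v - u)) (ketbra v (x - v)) (ketbra x (u - x)) p q r))"
proof -
  have "finite S" and "card S > 0"
    using assms unitary_2_design_card_pos by (auto simp: unitary_2_design_def)
  then have "real CARD('n) ^ 3 / real (card S) ^ 3 * (real (card S) / real CARD('n)) ^ 3 = 1"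
    by (simp add: power_divide card_gt_0_iff)
  then have normalization:
    "complex_of_real (real CARD('n) ^ 3 / real (card S) ^ 3)
      * of_real (real (card S) / real CARD('n)) ^ 3 = 1"
    by (metis of_real_1 of_real_mult of_real_power)
  show ?thesis
    unfolding sum_distinct_triples_eq [OF \<open>finite S\<close>] unitary_2_design_triple_sum [OF assms]
      mult.assoc [symmetric] normalization
    by simp
qed

end
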